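(* For every $W\in\mathrm{Gr}^{ad}$ and every $\gamma=e^{p(z)}\in\Gamma$, one has $R_{\gamma W}=\gamma R_W\gamma^{-1}=\Phi_p(R_W)$. In particular, under the bijection $W\mapsto[R_W]$ from $\mathrm{Gr}^{ad}$ to $\mathcal R$, the action of the automorphism $\Phi_p$ on $\mathcal R$ corresponds to $W\mapsto e^{p(z)}W$.
   Context: $A_1=\mathbb C[z,\partial]$, $\partial=d/dz$; $\Phi_p(D)=e^{p(z)}De^{-p(z)}$. $\mathcal R$ = isomorphism classes of nonzero right ideals of $A_1$, with automorphisms acting by $\sigma\star[I]=[\sigma(I)]$. $\mathrm{Gr}^{ad}$: subspaces $W=m_V^{-1}V\subset\mathbb C(z)$ where $V\subset\mathbb C[z]$ is a finite intersection of subspaces $V_\lambda\supset(z-\lambda)^{r}\mathbb C[z]$ (distinct $\lambda$) and $m_V=\prod(z-\lambda)^{\dim\mathbb C[z]/V_\lambda}$. $\Gamma=\{e^{p(z)}\}$ acts by $\gamma W=m_V^{-1}((\gamma\overline V)\cap\mathbb C[z])$, $\overline V$ the closure of $V$ in the space of entire functions with compact-open topology. $R_W=\{D\in\mathbb C(z)[\partial]: D.\mathbb C[z]\subset W\}$, a fractional right ideal of $A_1$. *)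

theory Defs
  imports "HOL-Analysis.Analysis" "HOL-Computational_Algebra.Computational_Algebra"
begin

type_synonym ratfun = "complex poly fract"

text \<open>Derivative of a rational function a/b: (a' b - a b') / b^2; this value does not
  depend on the chosen representative (a, b) with b nonzero.\<close>
definition rderiv :: "ratfun \<Rightarrow> ratfun" where
  "rderiv x = (SOME y. \<forall>a b. b \<noteq> 0 \<longrightarrow> x = Fract a b \<longrightarrow>
      y = Fract (pderiv a * b - a * pderiv b) (b * b))"

text \<open>An operator D = sum_i a_i d^i (coefficients written on the left) is encoded by
  the polynomial in d with coefficients a_i in C(z); only the coefficients are used,
  composition is defined separately below.\<close>
type_synonym dop = "ratfun poly"

definition dapply :: "dop \<Rightarrow> ratfun \<Rightarrow> ratfun" where
  "dapply D f = (\<Sum>i\<le>degree D. coeff D i * (rderiv ^^ i) f)"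

text \<open>Left composition with d: d o (sum_j b_j d^j) = sum_j (b_j' d^j + b_j d^(j+1)).\<close>
definition dz_comp :: "dop \<Rightarrow> dop" where
  "dz_comp E = map_poly rderiv E + pCons 0 E"

text \<open>The operator (d - q)^i, computed by left multiplication.\<close>
primrec shift_pow :: "ratfun \<Rightarrow> nat \<Rightarrow> dop" where
  "shift_pow q 0 = 1"
| "shift_pow q (Suc i) = dz_comp (shift_pow q i) - smult q (shift_pow q i)"

text \<open>Phi_p(D) = e^p D e^(-p).  Since e^p d e^(-p) = d - p', one has
  Phi_p(sum_i a_i d^i) = sum_i a_i (d - p')^i.\<close>
definition Phi :: "complex poly \<Rightarrow> dop \<Rightarrow> dop" where
  "Phi p D = (\<Sum>i\<le>degree D. smult (coeff D i) (shift_pow (to_fract (pderiv p)) i))"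

definition R_of :: "ratfun set \<Rightarrow> dop set" where
  "R_of W = {D. \<forall>q :: complex poly. dapply D (to_fract q) \<in> W}"

definition csubspace_poly :: "complex poly set \<Rightarrow> bool" where
  "csubspace_poly V \<longleftrightarrow> 0 \<in> V \<and> (\<forall>x\<in>V. \<forall>y\<in>V. x + y \<in> V) \<and> (\<forall>c. \<forall>x\<in>V. smult c x \<in> V)"

definition codim_poly :: "complex poly set \<Rightarrow> nat" where
  "codim_poly V = (LEAST n. \<exists>B. finite B \<and> card B = n \<and>
      (\<forall>q. \<exists>v\<in>V. \<exists>c. q = v + (\<Sum>b\<in>B. smult (c b) b)))"

definition adelic_data :: "complex set \<Rightarrow> (complex \<Rightarrow> complex poly set) \<Rightarrow> bool" where
  "adelic_data Lam Vs \<longleftrightarrow> finite Lam \<and>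
     (\<forall>lam\<in>Lam. csubspace_poly (Vs lam) \<and>
        (\<exists>r. \<forall>q. [:-lam, 1:] ^ r * q \<in> Vs lam))"

definition V_of :: "complex set \<Rightarrow> (complex \<Rightarrow> complex poly set) \<Rightarrow> complex poly set" where
  "V_of Lam Vs = (\<Inter>lam\<in>Lam. Vs lam)"

definition m_of :: "complex set \<Rightarrow> (complex \<Rightarrow> complex poly set) \<Rightarrow> complex poly" where
  "m_of Lam Vs = (\<Prod>lam\<in>Lam. [:-lam, 1:] ^ codim_poly (Vs lam))"

definition W_of :: "complex set \<Rightarrow> (complex \<Rightarrow> complex poly set) \<Rightarrow> ratfun set" where
  "W_of Lam Vs = {Fract v (m_of Lam Vs) | v. v \<in> V_of Lam Vs}"

definition Gr_ad :: "ratfun set set" where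
  "Gr_ad = {W_of Lam Vs | Lam Vs. adelic_data Lam Vs}"

text \<open>Closure of a set of polynomials in the space of entire functions with the
  compact-open topology (= topology of uniform convergence on compact sets, whose
  basic neighbourhoods are {g. sup_K |g - f| < e}).\<close>
definition ent_closure :: "complex poly set \<Rightarrow> (complex \<Rightarrow> complex) set" where
  "ent_closure V = {f. f holomorphic_on UNIV \<and>
      (\<forall>K e. compact K \<and> e > 0 \<longrightarrow> (\<exists>v\<in>V. \<forall>z\<in>K. norm (poly v z - f z) < e))}"

definition gamma_polys :: "complex poly \<Rightarrow> complex poly set \<Rightarrow> complex poly set" where
  "gamma_polys p V = {q. \<exists>f\<in>ent_closure V. \<forall>z. poly q z = exp (poly p z) * f z}"

text \<open>gamma W = m_V^(-1) ((gamma V-bar) intersected with C[z]).\<close>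
definition gamma_act :: "complex poly \<Rightarrow> complex set \<Rightarrow> (complex \<Rightarrow> complex poly set) \<Rightarrow> ratfun set" where
  "gamma_act p Lam Vs = {Fract q (m_of Lam Vs) | q. q \<in> gamma_polys p (V_of Lam Vs)}"

end

theory Submission
  imports Defs "HOL-Complex_Analysis.Complex_Analysis"
begin

text \<open>Phi_p replaces d by d - p', so Phi_p D (q) = e^p D(e^-p q) for polynomials q. Put the
  coefficients of D over a common polynomial denominator beta, so that Phi_p D (q) = rho / beta.
  If D is in R_(gamma_p0 W), the numerator of D(T) over m_V is, for every polynomial T, e^p0
  times an element of the closure of V. Approximating e^-p q and its derivatives by polynomials
  T on large discs, beta times elements of that closure approximate e^-(p0+p) m_V rho locally
  uniformly. The maximum modulus principle on circles where |beta| is bounded below shows that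
  beta divides m_V rho and that the quotient s has e^-(p0+p) s in the closure of V. Hence
  Phi_p D (q) = s / m_V lies in gamma_(p0+p) W: Phi_p maps R_(gamma_p0 W) into R_(gamma_(p0+p) W).
  Since each V_lam contains (z - lam)^r C[z], V is closed in the compact-open topology, so
  W = gamma_0 W. Taking p0 = 0 gives one inclusion; p0 = p with p replaced by -p gives the other,
  as Phi_p inverts Phi_-p.\<close>

section \<open>Differentiating rational functions\<close>

lemma rderiv_Fract_representative_indep:
  fixes a b c d :: "complex poly"
  assumes "b \<noteq> 0" "d \<noteq> 0" and eq: "a * d = c * b"
  shows "Fract (pderiv a * b - a * pderiv b) (b * b) = Fract (pderiv c * d - c * pderiv d) (d * d)"
proof -
  have eq': "pderiv a * d + a * pderiv d = pderiv c * b + c * pderiv b"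
    using arg_cong[OF eq, of pderiv] by (simp add: pderiv_mult algebra_simps)
  have "(pderiv a * b - a * pderiv b) * (d * d) - (pderiv c * d - c * pderiv d) * (b * b)
     = b * d * (pderiv a * d + a * pderiv d - (pderiv c * b + c * pderiv b))
       - (a * d - c * b) * (pderiv b * d + b * pderiv d)"
    by (simp add: algebra_simps)
  also have "\<dots> = 0" by (simp add: eq eq')
  finally show ?thesis using assms by (simp add: eq_fract)
qed

lemma rderiv_Fract:
  assumes "b \<noteq> 0"
  shows "rderiv (Fract a b) = Fract (pderiv a * b - a * pderiv b) (b * b)"
proof -
  have "\<forall>a' b'. b' \<noteq> 0 \<longrightarrow> Fract a b = Fract a' b' \<longrightarrow>
      Fract (pderiv a * b - a * pderiv b) (b * b) = Fract (pderiv a' * b' - a' * pderiv b') (b' * b')"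
  proof (intro allI impI)
    fix a' b' :: "complex poly" assume "b' \<noteq> 0" "Fract a b = Fract a' b'"
    then show "Fract (pderiv a * b - a * pderiv b) (b * b) = Fract (pderiv a' * b' - a' * pderiv b') (b' * b')"
      using assms by (intro rderiv_Fract_representative_indep) (simp_all add: eq_fract)
  qed
  then have "\<forall>a' b'. b' \<noteq> 0 \<longrightarrow> Fract a b = Fract a' b' \<longrightarrow>
      rderiv (Fract a b) = Fract (pderiv a' * b' - a' * pderiv b') (b' * b')"
    unfolding rderiv_def by (rule someI)
  then show ?thesis using assms by blast
qed

lemma rderiv_to_fract [simp]: "rderiv (to_fract q) = to_fract (pderiv q)"
  by (simp add: to_fract_def rderiv_Fract)

lemma rderiv_0 [simp]: "rderiv 0 = 0"
  using rderiv_to_fract[of 0] by simp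

lemma rderiv_add [simp]: "rderiv (x + y) = rderiv x + rderiv y"
  by (cases x; cases y) (simp add: rderiv_Fract eq_fract pderiv_mult pderiv_add algebra_simps)

lemma rderiv_mult: "rderiv (x * y) = rderiv x * y + x * rderiv y"
  by (cases x; cases y) (simp add: rderiv_Fract eq_fract pderiv_mult pderiv_add algebra_simps)

lemma rderiv_iterate_to_fract: "(rderiv ^^ i) (to_fract q) = to_fract ((pderiv ^^ i) q)"
  by (induction i) auto

section \<open>Operators with d read as a connection\<close>

text \<open>Conjugation by e^p turns d into the connection d - p', so Phi_p is evaluation with d read
  as d - p'.\<close>

definition dop_eval :: "(ratfun \<Rightarrow> ratfun) \<Rightarrow> dop \<Rightarrow> ratfun \<Rightarrow> ratfun" where
  "dop_eval L E f = (\<Sum>i\<le>degree E. coeff E i * (L ^^ i) f)"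

lemma dapply_eq_dop_eval: "dapply = dop_eval rderiv"
  by (intro ext) (simp add: dapply_def dop_eval_def)

lemma dop_eval_eq_sum_atMost:
  assumes "degree E \<le> N"
  shows "dop_eval L E f = (\<Sum>i\<le>N. coeff E i * (L ^^ i) f)"
  unfolding dop_eval_def
  by (rule sum.mono_neutral_left) (use assms in \<open>auto simp: coeff_eq_0\<close>)

lemma dop_eval_add: "dop_eval L (E + F) f = dop_eval L E f + dop_eval L F f"
proof -
  let ?N = "max (degree E) (degree F)"
  have "degree (E + F) \<le> ?N" by (rule degree_add_le) auto
  then show ?thesis
    by (simp add: dop_eval_eq_sum_atMost[of _ ?N] dop_eval_eq_sum_atMost[of E ?N]
        dop_eval_eq_sum_atMost[of F ?N] sum.distrib algebra_simps)
qed

lemma dop_eval_smult: "dop_eval L (smult c E) f = c * dop_eval L E f"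
  by (simp add: dop_eval_eq_sum_atMost[of "smult c E" "degree E"] dop_eval_def
      sum_distrib_left mult.assoc)

lemma dop_eval_0 [simp]: "dop_eval L 0 f = 0"
  by (simp add: dop_eval_def)

lemma dop_eval_1 [simp]: "dop_eval L 1 f = f"
  by (simp add: dop_eval_def)

lemma dop_eval_diff: "dop_eval L (E - F) f = dop_eval L E f - dop_eval L F f"
  using dop_eval_add[of L "E - F" F f] by simp

lemma dop_eval_sum: "dop_eval L (sum G A) f = (\<Sum>i\<in>A. dop_eval L (G i) f)"
  by (induction A rule: infinite_finite_induct) (auto simp: dop_eval_add)

definition rderiv_connection :: "(ratfun \<Rightarrow> ratfun) \<Rightarrow> bool" where
  "rderiv_connection L \<longleftrightarrow>
     (\<forall>x y. L (x + y) = L x + L y) \<and> (\<forall>x y. L (x * y) = rderiv x * y + x * L y)"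

lemma rderiv_connection_sum:
  assumes "rderiv_connection L"
  shows "L (sum G A) = (\<Sum>i\<in>A. L (G i))"
proof -
  have "L 0 = 0"
    using assms unfolding rderiv_connection_def by (metis add_cancel_right_right add_0)
  then show ?thesis
    using assms by (induction A rule: infinite_finite_induct) (auto simp: rderiv_connection_def)
qed

lemma rderiv_connection_rderiv: "rderiv_connection rderiv"
  by (simp add: rderiv_connection_def rderiv_mult)

lemma rderiv_connection_shift:
  "rderiv_connection L \<Longrightarrow> rderiv_connection (\<lambda>y. L y - c * y)"
  by (simp add: rderiv_connection_def algebra_simps)

lemma dop_eval_dz_comp:
  assumes L: "rderiv_connection L"
  shows "dop_eval L (dz_comp E) f = L (dop_eval L E f)"
proof -
  have "degree (map_poly rderiv E) \<le> Suc (degree E)"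
    by (rule degree_le) (simp add: coeff_map_poly coeff_eq_0)
  then have "dop_eval L (map_poly rderiv E) f = (\<Sum>i\<le>degree E. rderiv (coeff E i) * (L ^^ i) f)"
    by (simp add: dop_eval_eq_sum_atMost coeff_map_poly coeff_eq_0)
  moreover have "dop_eval L (pCons 0 E) f = (\<Sum>i\<le>degree E. coeff E i * (L ^^ Suc i) f)"
    by (simp only: dop_eval_eq_sum_atMost[OF degree_pCons_le] sum.atMost_Suc_shift) simp
  moreover have "L (dop_eval L E f) =
      (\<Sum>i\<le>degree E. rderiv (coeff E i) * (L ^^ i) f + coeff E i * (L ^^ Suc i) f)"
    using L by (simp add: dop_eval_def rderiv_connection_sum rderiv_connection_def)
  ultimately show ?thesis
    by (simp add: dz_comp_def dop_eval_add sum.distrib del: funpow.simps)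
qed

lemma dop_eval_shift_pow:
  assumes "rderiv_connection L"
  shows "dop_eval L (shift_pow c i) f = ((\<lambda>y. L y - c * y) ^^ i) f"
  by (induction i) (simp_all add: dop_eval_diff dop_eval_smult dop_eval_dz_comp[OF assms])

lemma dop_eval_Phi:
  assumes "rderiv_connection L"
  shows "dop_eval L (Phi p E) f = dop_eval (\<lambda>y. L y - to_fract (pderiv p) * y) E f"
proof -
  have "dop_eval L (Phi p E) f =
      (\<Sum>i\<le>degree E. coeff E i * ((\<lambda>y. L y - to_fract (pderiv p) * y) ^^ i) f)"
    by (simp add: Phi_def dop_eval_sum dop_eval_smult dop_eval_shift_pow[OF assms])
  then show ?thesis by (simp add: dop_eval_def)
qed

lemma higher_pderiv_monom_self: "(pderiv ^^ k) (monom (1::complex) k) = [:fact k:]"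
  by (rule poly_eqI) (auto simp: coeff_higher_pderiv coeff_monom pochhammer_fact coeff_pCons
      split: nat.split)

lemma higher_pderiv_monom_above:
  "k < i \<Longrightarrow> (pderiv ^^ i) (monom (1::complex) k) = 0"
  by (rule poly_eqI) (simp add: coeff_higher_pderiv coeff_monom)

text \<open>Testing against the monomials z^k, the coefficients of E vanish by induction on k.\<close>

lemma dop_eq_0_if_annihilates_polys:
  assumes "\<And>q. dapply E (to_fract q) = 0"
  shows "E = 0"
proof (rule poly_eqI)
  fix k show "coeff E k = coeff 0 k"
  proof (induction k rule: less_induct)
    case (less k)
    let ?zk = "to_fract (monom 1 k)"
    have vanish: "coeff E i * (rderiv ^^ i) ?zk = 0" if "i \<noteq> k" for i
      using less that by (cases "i < k")
        (simp_all add: rderiv_iterate_to_fract higher_pderiv_monom_above)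
    have "0 = dapply E ?zk" using assms by simp
    also have "\<dots> = (\<Sum>i\<le>max k (degree E). coeff E i * (rderiv ^^ i) ?zk)"
      unfolding dapply_eq_dop_eval by (rule dop_eval_eq_sum_atMost) simp
    also have "\<dots> = (\<Sum>i\<in>{k}. coeff E i * (rderiv ^^ i) ?zk)"
      by (rule sum.mono_neutral_right) (use vanish in auto)
    finally have "coeff E k * to_fract [:fact k:] = 0"
      by (simp add: rderiv_iterate_to_fract higher_pderiv_monom_self)
    then show ?case by simp
  qed
qed

lemma Phi_Phi_uminus: "Phi p (Phi (-p) D) = D"
proof -
  have "(\<lambda>y. rderiv y - to_fract (pderiv p) * y - to_fract (pderiv (- p)) * y) = rderiv"
    by (auto simp: pderiv_minus)
  then have "dapply (Phi p (Phi (-p) D) - D) f = 0" for f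
    by (simp add: dapply_eq_dop_eval dop_eval_diff dop_eval_Phi rderiv_connection_rderiv
        rderiv_connection_shift)
  then show ?thesis
    using dop_eq_0_if_annihilates_polys[of "Phi p (Phi (-p) D) - D"] by simp
qed

lemma common_denominator:
  fixes c :: "nat \<Rightarrow> 'a::idom fract"
  shows "\<exists>\<alpha> \<beta>. \<beta> \<noteq> 0 \<and> (\<forall>i\<le>N. c i = Fract (\<alpha> i) \<beta>)"
proof (induction N)
  case 0
  obtain a b where "c 0 = Fract a b" "b \<noteq> 0" by (cases "c 0") auto
  then show ?case by (intro exI[of _ "\<lambda>_. a"] exI[of _ b]) auto
next
  case (Suc N)
  then obtain \<alpha> \<beta> where \<beta>: "\<beta> \<noteq> 0" and \<alpha>: "\<forall>i\<le>N. c i = Fract (\<alpha> i) \<beta>" by blast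
  obtain a b where ab: "c (Suc N) = Fract a b" "b \<noteq> 0" by (cases "c (Suc N)") auto
  define \<alpha>' where "\<alpha>' i = (if i \<le> N then \<alpha> i * b else a * \<beta>)" for i
  have "c i = Fract (\<alpha>' i) (\<beta> * b)" if "i \<le> Suc N" for i
    using that \<alpha> \<beta> ab mult_fract_cancel[of b "\<alpha> i" \<beta>] mult_fract_cancel[of \<beta> a b]
    by (cases "i \<le> N") (auto simp: \<alpha>'_def mult.commute le_Suc_eq)
  then show ?case using \<beta> ab(2) by (intro exI[of _ \<alpha>'] exI[of _ "\<beta> * b"]) auto
qed

lemma dop_eval_Fract_coeffs:
  assumes "\<beta> \<noteq> 0" and coeffs: "\<forall>i\<le>degree D. coeff D i = Fract (\<alpha> i) \<beta>"
    and iterates: "\<And>i. (L ^^ i) (to_fract q) = to_fract (Q i)"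
  shows "dop_eval L D (to_fract q) = Fract (\<Sum>i\<le>degree D. \<alpha> i * Q i) \<beta>"
proof -
  have "dop_eval L D (to_fract q) = (\<Sum>i\<le>degree D. to_fract (\<alpha> i * Q i) / to_fract \<beta>)"
    unfolding dop_eval_def using coeffs by (intro sum.cong) (simp_all add: iterates Fract_conv_to_fract)
  then show ?thesis by (simp add: Fract_conv_to_fract sum_divide_distrib)
qed

text \<open>d/dz (e^-p q) = e^-p (q' - p' q).\<close>

definition twisted_pderiv :: "complex poly \<Rightarrow> complex poly \<Rightarrow> complex poly" where
  "twisted_pderiv p q = pderiv q - pderiv p * q"

lemma dapply_Fract_coeffs:
  assumes "\<beta> \<noteq> 0" "\<forall>i\<le>degree D. coeff D i = Fract (\<alpha> i) \<beta>"
  shows "dapply D (to_fract q) = Fract (\<Sum>i\<le>degree D. \<alpha> i * (pderiv ^^ i) q) \<beta>"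
  unfolding dapply_eq_dop_eval by (rule dop_eval_Fract_coeffs[OF assms rderiv_iterate_to_fract])

lemma dapply_Phi_Fract_coeffs:
  assumes "\<beta> \<noteq> 0" "\<forall>i\<le>degree D. coeff D i = Fract (\<alpha> i) \<beta>"
  shows "dapply (Phi p D) (to_fract q) = Fract (\<Sum>i\<le>degree D. \<alpha> i * (twisted_pderiv p ^^ i) q) \<beta>"
proof -
  have "((\<lambda>y. rderiv y - to_fract (pderiv p) * y) ^^ i) (to_fract q) =
      to_fract ((twisted_pderiv p ^^ i) q)" for i
    by (induction i) (simp_all add: twisted_pderiv_def)
  then show ?thesis
    unfolding dapply_eq_dop_eval dop_eval_Phi[OF rderiv_connection_rderiv]
    by (rule dop_eval_Fract_coeffs[OF assms])
qed

section \<open>Estimates for entire functions\<close>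

lemma higher_deriv_poly: "(deriv ^^ i) (poly T) = poly ((pderiv ^^ i) (T :: complex poly))"
proof -
  have deriv_poly: "deriv (poly Q) = poly (pderiv Q)" for Q :: "complex poly"
    by (intro ext DERIV_imp_deriv poly_DERIV)
  show ?thesis by (induction i) (simp_all add: deriv_poly)
qed

lemma higher_deriv_exp_poly_mult:
  "(deriv ^^ i) (\<lambda>z. exp (- poly p z) * poly q z) =
     (\<lambda>z. exp (- poly p z) * poly ((twisted_pderiv p ^^ i) q) z)"
proof -
  have deriv_exp_poly: "deriv (\<lambda>z. exp (- poly p z) * poly Q z) =
      (\<lambda>z. exp (- poly p z) * poly (twisted_pderiv p Q) z)" for Q
    by (intro ext DERIV_imp_deriv)
      (auto intro!: derivative_eq_intros poly_DERIV simp: twisted_pderiv_def algebra_simps)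
  show ?thesis by (induction i) (simp_all add: deriv_exp_poly)
qed

lemma entire_poly_approx:
  fixes g :: "complex \<Rightarrow> complex"
  assumes g: "g holomorphic_on UNIV" and "e > 0"
  obtains T where "\<forall>z\<in>cball 0 R. cmod (poly T z - g z) < e"
proof -
  define a where "a n = (deriv ^^ n) g 0 / fact n" for n
  have sums: "(\<lambda>n. a n * z ^ n) sums g z" for z
    using holomorphic_power_series[of g 0 "cmod z + 1" z] g
    by (auto simp: a_def holomorphic_on_subset)
  have "ereal R < ereal (norm (complex_of_real (\<bar>R\<bar> + 1)))" by simp
  also have "\<dots> \<le> conv_radius a" by (rule conv_radius_geI) (use sums in \<open>blast intro: sums_summable\<close>)
  finally have "uniform_limit (cball 0 R) (\<lambda>n x. \<Sum>i<n. a i * (x - 0) ^ i)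
      (\<lambda>x. suminf (\<lambda>i. a i * (x - 0) ^ i)) sequentially"
    by (rule powser_uniform_limit)
  then obtain n where "\<forall>z\<in>cball 0 R. dist (\<Sum>i<n. a i * z ^ i) (g z) < e"
    using \<open>e > 0\<close> sums_unique[OF sums]
    unfolding uniform_limit_sequentially_iff by fastforce
  then have "\<forall>z\<in>cball 0 R. cmod (poly (\<Sum>i<n. monom (a i) i) z - g z) < e"
    by (simp add: poly_sum poly_monom dist_norm)
  then show ?thesis by (rule that)
qed

lemma norm_higher_deriv_le:
  fixes h :: "complex \<Rightarrow> complex"
  assumes h: "h holomorphic_on UNIV" and bound: "\<forall>w\<in>cball c (R + 1). cmod (h w) < e"
    and z: "z \<in> cball c R"
  shows "cmod ((deriv ^^ i) h z) \<le> fact i * e"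
proof (cases "i = 0")
  case True
  have "z \<in> cball c (R + 1)" using z by simp
  then show ?thesis using True bound by (simp add: less_imp_le)
next
  case False
  have "ball z 1 \<subseteq> cball c (R + 1)"
    by (rule order.trans[OF ball_subset_cball]) (use z in \<open>simp add: cball_subset_cball_iff dist_commute\<close>)
  then have "cmod ((deriv ^^ i) h z) \<le> fact i * e / 1 ^ i"
    using False h bound
    by (intro Cauchy_higher_deriv_bound[where y = 0])
      (auto intro: holomorphic_on_subset holomorphic_on_imp_continuous_on)
  then show ?thesis by simp
qed

lemma entire_poly_approx_higher_derivs:
  fixes g :: "complex \<Rightarrow> complex"
  assumes g: "g holomorphic_on UNIV" and "e > 0"
  obtains T where
    "\<forall>i. \<forall>z\<in>cball 0 R. cmod (poly ((pderiv ^^ i) T) z - (deriv ^^ i) g z) \<le> fact i * e"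
proof -
  obtain T where T: "\<forall>z\<in>cball 0 (R + 1). cmod (poly T z - g z) < e"
    using entire_poly_approx[OF g \<open>e > 0\<close>] by blast
  have hol: "(\<lambda>z. poly T z - g z) holomorphic_on UNIV" by (intro holomorphic_intros g)
  have "cmod (poly ((pderiv ^^ i) T) z - (deriv ^^ i) g z) \<le> fact i * e" if "z \<in> cball 0 R" for i z
  proof -
    have "(deriv ^^ i) (\<lambda>z. poly T z - g z) z = poly ((pderiv ^^ i) T) z - (deriv ^^ i) g z"
      using higher_deriv_diff[of "poly T" UNIV g z i] g
      by (simp add: higher_deriv_poly holomorphic_intros)
    moreover have "cmod ((deriv ^^ i) (\<lambda>z. poly T z - g z) z) \<le> fact i * e"
      using T that by (intro norm_higher_deriv_le[OF hol]) auto
    ultimately show ?thesis by simp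
  qed
  then show ?thesis using that by blast
qed

lemma entire_norm_le_on_cball:
  fixes h :: "complex \<Rightarrow> complex"
  assumes h: "h holomorphic_on UNIV" and "r > 0"
    and sphere: "\<forall>w. cmod w = r \<longrightarrow> cmod (h w) \<le> B" and "cmod z \<le> r"
  shows "cmod (h z) \<le> B"
proof (rule maximum_modulus_frontier[of h "cball 0 r"])
  show "h holomorphic_on interior (cball 0 r)" using h by (rule holomorphic_on_subset) auto
  show "continuous_on (closure (cball 0 r)) h"
    using h holomorphic_on_imp_continuous_on continuous_on_subset by blast
  show "\<And>w. w \<in> frontier (cball 0 r) \<Longrightarrow> cmod (h w) \<le> B"
    using sphere \<open>r > 0\<close> by (auto simp: frontier_cball)
qed (use \<open>cmod z \<le> r\<close> in auto)

lemma entire_norm_le_on_cball_div: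
  fixes h :: "complex \<Rightarrow> complex"
  assumes h: "h holomorphic_on UNIV" and "r > 0" "c > 0"
    and lower: "\<forall>w. cmod w = r \<longrightarrow> c \<le> cmod (poly \<beta> w)"
    and upper: "\<forall>w. cmod w = r \<longrightarrow> cmod (h w * poly \<beta> w) \<le> B" and "cmod z \<le> r"
  shows "cmod (h z) \<le> B / c"
proof (rule entire_norm_le_on_cball[OF h \<open>r > 0\<close> _ \<open>cmod z \<le> r\<close>], intro allI impI)
  fix w :: complex assume w: "cmod w = r"
  have "cmod (h w) * c \<le> cmod (h w) * cmod (poly \<beta> w)"
    using lower w by (intro mult_left_mono) auto
  also have "\<dots> \<le> B" using upper w by (simp add: norm_mult)
  finally show "cmod (h w) \<le> B / c" using \<open>c > 0\<close> by (simp add: field_simps)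
qed

lemma poly_roots_bounded:
  fixes \<beta> :: "complex poly"
  assumes "\<beta> \<noteq> 0"
  obtains B where "B \<ge> 0" "\<forall>z. poly \<beta> z = 0 \<longrightarrow> cmod z \<le> B"
proof -
  have "bounded {z. poly \<beta> z = 0}" by (rule finite_imp_bounded[OF poly_roots_finite[OF assms]])
  then obtain B where "B > 0" "\<forall>z\<in>{z. poly \<beta> z = 0}. cmod z \<le> B" using bounded_pos by blast
  then show ?thesis by (intro that[of B]) auto
qed

lemma poly_bounded_below_on_sphere:
  fixes \<beta> :: "complex poly"
  assumes roots: "\<forall>z. poly \<beta> z = 0 \<longrightarrow> cmod z < r" and "r > 0"
  obtains c where "c > 0" "\<forall>w. cmod w = r \<longrightarrow> c \<le> cmod (poly \<beta> w)"
proof -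
  have "sphere (0::complex) r \<noteq> {}" using \<open>r > 0\<close> by simp
  moreover have "continuous_on (sphere 0 r) (\<lambda>z. cmod (poly \<beta> z))" by (intro continuous_intros)
  ultimately obtain w0 where w0: "w0 \<in> sphere 0 r"
    "\<forall>w\<in>sphere 0 r. cmod (poly \<beta> w0) \<le> cmod (poly \<beta> w)"
    using continuous_attains_inf[OF compact_sphere] by blast
  have "poly \<beta> w0 \<noteq> 0" using roots w0(1) by auto
  then show ?thesis using w0 by (intro that[of "cmod (poly \<beta> w0)"]) auto
qed

lemma norm_le_cancel_linear_factor:
  fixes A B :: "complex poly"
  assumes bound: "\<forall>w. cmod w < r \<longrightarrow>
      cmod (poly ([:-z0, 1:] * A) w) \<le> C * cmod (poly ([:-z0, 1:] * B) w)"
    and "cmod z < r"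
  shows "cmod (poly A z) \<le> C * cmod (poly B z)"
proof -
  let ?gap = "\<lambda>w. C * cmod (poly B w) - cmod (poly A w)"
  have "\<forall>\<^sub>F w in at z. w \<in> ball 0 r \<and> w \<noteq> z0"
    using \<open>cmod z < r\<close> by (intro eventually_conj eventually_at_in_open' eventually_neq_at_within) auto
  then have "\<forall>\<^sub>F w in at z. 0 \<le> ?gap w"
  proof eventually_elim
    case (elim w)
    have factor: "cmod (poly ([:-z0, 1:] * Q) w) = cmod (w - z0) * cmod (poly Q w)" for Q
      by (simp add: norm_mult[symmetric] algebra_simps)
    have "cmod (poly ([:-z0, 1:] * A) w) \<le> C * cmod (poly ([:-z0, 1:] * B) w)"
      using bound elim by simp
    then have "cmod (w - z0) * cmod (poly A w) \<le> cmod (w - z0) * (C * cmod (poly B w))"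
      unfolding factor by (simp add: mult.left_commute)
    then show ?case using elim by simp
  qed
  moreover have "(?gap \<longlongrightarrow> ?gap z) (at z)"
    by (intro tendsto_intros continuous_imp_tendsto)
  ultimately have "0 \<le> ?gap z" by (intro tendsto_lowerbound) auto
  then show ?thesis by simp
qed

text \<open>A zero of B inside the disc is a zero of A; divide it out and induct on the degree.\<close>

lemma poly_dvd_if_norm_le:
  fixes A B :: "complex poly"
  assumes "B \<noteq> 0" "\<forall>z. poly B z = 0 \<longrightarrow> cmod z < r"
    and "\<forall>z. cmod z < r \<longrightarrow> cmod (poly A z) \<le> C * cmod (poly B z)"
  shows "B dvd A"
  using assms
proof (induction "degree B" arbitrary: A B rule: less_induct)
  case less
  show ?case
  proof (cases "degree B = 0")
    case True
    then obtain c where "B = [:c:]" by (metis degree_0_id)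
    then show ?thesis using less.prems(1) by (simp add: const_poly_dvd_iff dvd_field_iff)
  next
    case False
    then obtain z0 where z0: "poly B z0 = 0" using alg_closed_imp_poly_has_root by blast
    then have "cmod (poly A z0) \<le> 0" using less.prems(2,3) by (metis mult_zero_right norm_zero)
    then have "poly A z0 = 0" by simp
    then obtain A1 where A1: "A = [:-z0, 1:] * A1" using poly_eq_0_iff_dvd by (metis dvdE)
    obtain B1 where B1: "B = [:-z0, 1:] * B1" using z0 poly_eq_0_iff_dvd by (metis dvdE)
    have "B1 \<noteq> 0" using B1 less.prems(1) by auto
    then have "degree B1 < degree B" unfolding B1 by (subst degree_mult_eq) auto
    moreover have "\<forall>z. poly B1 z = 0 \<longrightarrow> cmod z < r" using less.prems(2) B1 by simp
    moreover have "\<forall>z. cmod z < r \<longrightarrow> cmod (poly A1 z) \<le> C * cmod (poly B1 z)"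
    proof (intro allI impI)
      fix z :: complex assume "cmod z < r"
      then show "cmod (poly A1 z) \<le> C * cmod (poly B1 z)"
        using less.prems(3) unfolding A1 B1 by (rule norm_le_cancel_linear_factor[rotated])
    qed
    ultimately have "B1 dvd A1" using less.hyps \<open>B1 \<noteq> 0\<close> by blast
    then show ?thesis unfolding A1 B1 by (rule mult_dvd_mono[OF dvd_refl])
  qed
qed

section \<open>Divisibility from locally uniform approximation\<close>

definition approx_on_compacts :: "(complex \<Rightarrow> complex) set \<Rightarrow> (complex \<Rightarrow> complex) \<Rightarrow> bool" where
  "approx_on_compacts F h \<longleftrightarrow>
     (\<forall>K e. compact K \<and> e > 0 \<longrightarrow> (\<exists>f\<in>F. \<forall>z\<in>K. cmod (f z - h z) < e))"

lemma approx_by_products_on_cball: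
  fixes H g :: "complex \<Rightarrow> complex" and F :: "(complex \<Rightarrow> complex) set"
  assumes H: "H holomorphic_on UNIV" and g: "g holomorphic_on UNIV"
    and products: "\<forall>T. \<exists>f\<in>F. \<forall>z.
      f z * poly \<beta> z = H z * (\<Sum>i\<le>N. poly (\<alpha> i) z * poly ((pderiv ^^ i) T) z)"
    and "d > 0"
  obtains f where "f \<in> F"
    "\<forall>z\<in>cball 0 R. cmod (f z * poly \<beta> z - H z * (\<Sum>i\<le>N. poly (\<alpha> i) z * (deriv ^^ i) g z)) \<le> d"
proof -
  define B where "B z = cmod (H z) * (\<Sum>i\<le>N. cmod (poly (\<alpha> i) z) * fact i)" for z
  have "continuous_on (cball 0 R) B"
    unfolding B_def using H by (intro continuous_intros) (auto intro: holomorphic_on_imp_continuous_on continuous_on_subset)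
  then obtain C where C: "C \<ge> 0" "\<And>z. z \<in> cball 0 R \<Longrightarrow> norm (B z) \<le> C"
    using continuous_on_compact_bound[OF compact_cball] by blast
  define e where "e = d / (C + 1)"
  have "e > 0" using \<open>d > 0\<close> C(1) by (simp add: e_def)
  then obtain T where T:
    "\<forall>i. \<forall>z\<in>cball 0 R. cmod (poly ((pderiv ^^ i) T) z - (deriv ^^ i) g z) \<le> fact i * e"
    using entire_poly_approx_higher_derivs[OF g] by blast
  obtain f where f: "f \<in> F"
    "\<forall>z. f z * poly \<beta> z = H z * (\<Sum>i\<le>N. poly (\<alpha> i) z * poly ((pderiv ^^ i) T) z)"
    using products by blast
  have "cmod (f z * poly \<beta> z - H z * (\<Sum>i\<le>N. poly (\<alpha> i) z * (deriv ^^ i) g z)) \<le> d"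
    if z: "z \<in> cball 0 R" for z
  proof -
    have "f z * poly \<beta> z - H z * (\<Sum>i\<le>N. poly (\<alpha> i) z * (deriv ^^ i) g z) =
        H z * (\<Sum>i\<le>N. poly (\<alpha> i) z * (poly ((pderiv ^^ i) T) z - (deriv ^^ i) g z))"
      using f(2) by (simp add: algebra_simps sum_subtractf)
    also have "cmod \<dots> \<le> cmod (H z) * (\<Sum>i\<le>N. cmod (poly (\<alpha> i) z) * (fact i * e))"
      unfolding norm_mult using T z
      by (intro mult_left_mono order.trans[OF norm_sum] sum_mono) (auto simp: norm_mult mult_left_mono)
    also have "\<dots> = B z * e"
      by (simp add: B_def sum_distrib_right sum_distrib_left mult_ac)
    also have "\<dots> \<le> (C + 1) * e"
      using C(2)[OF z] \<open>e > 0\<close> by (intro mult_right_mono) auto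
    also have "\<dots> = d" using C(1) by (simp add: e_def)
    finally show ?thesis .
  qed
  then show ?thesis using f(1) that by blast
qed

context
  fixes F :: "(complex \<Rightarrow> complex) set" and \<beta> P u :: "complex poly"
  assumes entire: "\<forall>f\<in>F. f holomorphic_on UNIV" and "\<beta> \<noteq> 0"
    and approx: "\<forall>R d. d > 0 \<longrightarrow>
      (\<exists>f\<in>F. \<forall>z\<in>cball 0 R. cmod (f z * poly \<beta> z - exp (poly u z) * poly P z) \<le> d)"
begin

lemma norm_le_multiple_on_cball:
  assumes "r > 0" "c > 0" and c: "\<forall>w. cmod w = r \<longrightarrow> c \<le> cmod (poly \<beta> w)"
  obtains C where "\<forall>z. cmod z \<le> r \<longrightarrow> cmod (exp (poly u z) * poly P z) \<le> C * cmod (poly \<beta> z)"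
proof -
  define G where "G z = exp (poly u z) * poly P z" for z
  have "continuous_on (cball 0 r) G" unfolding G_def by (intro continuous_intros)
  then obtain M where M: "\<And>z. z \<in> cball 0 r \<Longrightarrow> norm (G z) \<le> M"
    using continuous_on_compact_bound[OF compact_cball] by blast
  have "cmod (G z) \<le> (M + 1) / c * cmod (poly \<beta> z)" if z: "cmod z \<le> r" for z
  proof (rule field_le_epsilon)
    fix d :: real assume "d > 0"
    then obtain f where "f \<in> F" and f: "\<forall>z\<in>cball 0 r. cmod (f z * poly \<beta> z - G z) \<le> min d 1"
      using approx unfolding G_def by (metis min_def zero_less_one)
    have "\<forall>w. cmod w = r \<longrightarrow> cmod (f w * poly \<beta> w) \<le> M + 1"
      using f M by (smt (verit, best) mem_cball_0 norm_triangle_ineq2 order_refl)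
    then have "cmod (f z) \<le> (M + 1) / c"
      using entire \<open>f \<in> F\<close> by (intro entire_norm_le_on_cball_div[OF _ \<open>r > 0\<close> \<open>c > 0\<close> c _ z]) auto
    then have "cmod (f z * poly \<beta> z) \<le> (M + 1) / c * cmod (poly \<beta> z)"
      unfolding norm_mult by (rule mult_right_mono) simp_all
    moreover have "cmod (G z) \<le> cmod (f z * poly \<beta> z) + d"
      using f z by (smt (verit) mem_cball_0 norm_triangle_ineq3 min.boundedE norm_minus_commute)
    ultimately show "cmod (G z) \<le> (M + 1) / c * cmod (poly \<beta> z) + d" by simp
  qed
  then show ?thesis using that unfolding G_def by blast
qed

lemma poly_dvd_if_approx_by_multiples: "\<beta> dvd P"
proof -
  obtain B where "B \<ge> 0" and B: "\<forall>z. poly \<beta> z = 0 \<longrightarrow> cmod z \<le> B"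
    using poly_roots_bounded[OF \<open>\<beta> \<noteq> 0\<close>] by blast
  define r where "r = B + 1"
  have "r > 0" and roots: "\<forall>z. poly \<beta> z = 0 \<longrightarrow> cmod z < r"
    using \<open>B \<ge> 0\<close> B by (auto simp: r_def)
  obtain c where "c > 0" and c: "\<forall>w. cmod w = r \<longrightarrow> c \<le> cmod (poly \<beta> w)"
    using poly_bounded_below_on_sphere[OF roots \<open>r > 0\<close>] by blast
  obtain C where C: "\<forall>z. cmod z \<le> r \<longrightarrow> cmod (exp (poly u z) * poly P z) \<le> C * cmod (poly \<beta> z)"
    using norm_le_multiple_on_cball[OF \<open>r > 0\<close> \<open>c > 0\<close> c] by blast
  have "continuous_on (cball 0 r) (\<lambda>z. exp (- poly u z))" by (intro continuous_intros)
  then obtain E where "E \<ge> 0" and E: "\<And>z. z \<in> cball 0 r \<Longrightarrow> norm (exp (- poly u z)) \<le> E"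
    using continuous_on_compact_bound[OF compact_cball] by blast
  show ?thesis
  proof (rule poly_dvd_if_norm_le[OF \<open>\<beta> \<noteq> 0\<close> roots], intro allI impI)
    fix z :: complex assume "cmod z < r"
    then have z: "z \<in> cball 0 r" by simp
    have "cmod (poly P z) = cmod (exp (- poly u z)) * cmod (exp (poly u z) * poly P z)"
      by (simp add: exp_minus norm_mult[symmetric] field_simps)
    also have "\<dots> \<le> E * (C * cmod (poly \<beta> z))"
      using E[OF z] C z \<open>E \<ge> 0\<close> by (intro mult_mono) auto
    finally show "cmod (poly P z) \<le> E * C * cmod (poly \<beta> z)" by (simp add: mult_ac)
  qed
qed

lemma approx_on_compacts_quotient_if_approx_by_multiples:
  assumes "P = \<beta> * s"
  shows "approx_on_compacts F (\<lambda>z. exp (poly u z) * poly s z)"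
  unfolding approx_on_compacts_def
proof (intro allI impI, elim conjE)
  fix K :: "complex set" and e :: real assume "compact K" "e > 0"
  obtain B where "B \<ge> 0" and B: "\<forall>z. poly \<beta> z = 0 \<longrightarrow> cmod z \<le> B"
    using poly_roots_bounded[OF \<open>\<beta> \<noteq> 0\<close>] by blast
  obtain RK where "RK > 0" and RK: "\<forall>z\<in>K. cmod z \<le> RK"
    using compact_imp_bounded[OF \<open>compact K\<close>] bounded_pos by blast
  define r where "r = B + RK + 1"
  have "r > 0" and roots: "\<forall>z. poly \<beta> z = 0 \<longrightarrow> cmod z < r"
    using \<open>B \<ge> 0\<close> \<open>RK > 0\<close> B by (auto simp: r_def)
  obtain c where "c > 0" and c: "\<forall>w. cmod w = r \<longrightarrow> c \<le> cmod (poly \<beta> w)"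
    using poly_bounded_below_on_sphere[OF roots \<open>r > 0\<close>] by blast
  obtain f where "f \<in> F" and f: "\<forall>z\<in>cball 0 r. cmod (f z * poly \<beta> z - exp (poly u z) * poly P z) \<le> c * e / 2"
    using approx \<open>c > 0\<close> \<open>e > 0\<close> by (metis half_gt_zero mult_pos_pos times_divide_eq_right)
  define h where "h z = f z - exp (poly u z) * poly s z" for z
  have "h holomorphic_on UNIV" unfolding h_def using entire \<open>f \<in> F\<close> by (intro holomorphic_intros) auto
  moreover have "\<forall>w. cmod w = r \<longrightarrow> cmod (h w * poly \<beta> w) \<le> c * e / 2"
    using f by (auto simp: h_def assms algebra_simps)
  ultimately have h_le: "cmod (h z) \<le> c * e / 2 / c" if "z \<in> K" for z
    using RK that \<open>B \<ge> 0\<close>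
    by (intro entire_norm_le_on_cball_div[OF _ \<open>r > 0\<close> \<open>c > 0\<close> c]) (auto simp: r_def)
  have "\<forall>z\<in>K. cmod (f z - exp (poly u z) * poly s z) < e"
  proof
    fix z assume "z \<in> K"
    then have "cmod (h z) \<le> e / 2" using h_le \<open>c > 0\<close> by simp
    then show "cmod (f z - exp (poly u z) * poly s z) < e" using \<open>e > 0\<close> by (simp add: h_def)
  qed
  then show "\<exists>f\<in>F. \<forall>z\<in>K. cmod (f z - exp (poly u z) * poly s z) < e" using \<open>f \<in> F\<close> by blast
qed

end

lemma exists_quotient_approx_on_compacts:
  fixes H g :: "complex \<Rightarrow> complex" and F :: "(complex \<Rightarrow> complex) set"
  assumes H: "H holomorphic_on UNIV" and g: "g holomorphic_on UNIV"
    and entire: "\<forall>f\<in>F. f holomorphic_on UNIV" and "\<beta> \<noteq> 0"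
    and products: "\<forall>T. \<exists>f\<in>F. \<forall>z.
      f z * poly \<beta> z = H z * (\<Sum>i\<le>N. poly (\<alpha> i) z * poly ((pderiv ^^ i) T) z)"
    and identity: "\<forall>z. H z * (\<Sum>i\<le>N. poly (\<alpha> i) z * (deriv ^^ i) g z) = exp (poly u z) * poly P z"
  obtains s where "P = \<beta> * s" "approx_on_compacts F (\<lambda>z. exp (poly u z) * poly s z)"
proof -
  have approx: "\<forall>R d. d > 0 \<longrightarrow>
      (\<exists>f\<in>F. \<forall>z\<in>cball 0 R. cmod (f z * poly \<beta> z - exp (poly u z) * poly P z) \<le> d)"
    using approx_by_products_on_cball[OF H g products] identity by metis
  have "\<beta> dvd P" by (rule poly_dvd_if_approx_by_multiples[OF entire \<open>\<beta> \<noteq> 0\<close> approx])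
  then obtain s where "P = \<beta> * s" by (elim dvdE)
  then show ?thesis
    using approx_on_compacts_quotient_if_approx_by_multiples[OF entire \<open>\<beta> \<noteq> 0\<close> approx] that by blast
qed

section \<open>Closedness of V\<close>

definition approx_in_coords :: "nat \<Rightarrow> (nat \<Rightarrow> complex) set \<Rightarrow> (nat \<Rightarrow> complex) \<Rightarrow> bool" where
  "approx_in_coords r U x \<longleftrightarrow> (\<forall>d>0. \<exists>u\<in>U. \<forall>k<r. cmod (u k - x k) \<le> d)"

definition csubspace_seq :: "(nat \<Rightarrow> complex) set \<Rightarrow> bool" where
  "csubspace_seq U \<longleftrightarrow> (\<lambda>k. 0) \<in> U \<and> (\<forall>x\<in>U. \<forall>y\<in>U. (\<lambda>k. x k + y k) \<in> U) \<and>
     (\<forall>c. \<forall>x\<in>U. (\<lambda>k. c * x k) \<in> U)"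

lemma csubspace_seq_add: "csubspace_seq U \<Longrightarrow> x \<in> U \<Longrightarrow> y \<in> U \<Longrightarrow> (\<lambda>k. x k + y k) \<in> U"
  by (simp add: csubspace_seq_def)

lemma csubspace_seq_scale: "csubspace_seq U \<Longrightarrow> x \<in> U \<Longrightarrow> (\<lambda>k. c * x k) \<in> U"
  by (simp add: csubspace_seq_def)

lemma csubspace_seq_diff:
  "csubspace_seq U \<Longrightarrow> x \<in> U \<Longrightarrow> y \<in> U \<Longrightarrow> (\<lambda>k. x k - c * y k) \<in> U"
proof -
  assume U: "csubspace_seq U" and "x \<in> U" "y \<in> U"
  have "(\<lambda>k. (- c) * y k) \<in> U" by (rule csubspace_seq_scale[OF U \<open>y \<in> U\<close>])
  then have "(\<lambda>k. x k + (- c) * y k) \<in> U" by (rule csubspace_seq_add[OF U \<open>x \<in> U\<close>])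
  then show ?thesis by simp
qed

lemma csubspace_seq_kernel:
  "csubspace_seq U \<Longrightarrow> csubspace_seq {u \<in> U. u r = 0}"
  by (simp add: csubspace_seq_def)

text \<open>Gaussian elimination with pivot w, which has w r = 1.\<close>

lemma approx_in_coords_eliminate:
  assumes U: "csubspace_seq U" and "w \<in> U" "w r = 1" and x: "approx_in_coords (Suc r) U x"
  shows "approx_in_coords r {u \<in> U. u r = 0} (\<lambda>k. x k - x r * w k)"
  unfolding approx_in_coords_def
proof (intro allI impI)
  fix d :: real assume "d > 0"
  define M where "M = (\<Sum>k<r. cmod (w k))"
  have "M \<ge> 0" by (simp add: M_def sum_nonneg)
  have w_le: "cmod (w k) \<le> M" if "k < r" for k
    unfolding M_def using that by (intro member_le_sum) auto
  have "d / (1 + M) > 0" using \<open>d > 0\<close> \<open>M \<ge> 0\<close> by simp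
  then obtain u where "u \<in> U" and u: "\<forall>k<Suc r. cmod (u k - x k) \<le> d / (1 + M)"
    using x unfolding approx_in_coords_def by blast
  have close: "cmod ((u k - u r * w k) - (x k - x r * w k)) \<le> d" if "k < r" for k
  proof -
    have "(u k - u r * w k) - (x k - x r * w k) = (u k - x k) - (u r - x r) * w k"
      by (simp add: algebra_simps)
    then have "cmod ((u k - u r * w k) - (x k - x r * w k)) \<le> cmod (u k - x k) + cmod (u r - x r) * cmod (w k)"
      by (metis norm_mult norm_triangle_ineq4)
    also have "\<dots> \<le> d / (1 + M) + d / (1 + M) * M"
      using u that w_le[OF that] \<open>d > 0\<close> \<open>M \<ge> 0\<close> by (intro add_mono mult_mono) auto
    also have "\<dots> = d / (1 + M) * (1 + M)" by (simp only: distrib_left mult_1_right)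
    also have "\<dots> = d" using \<open>M \<ge> 0\<close> by simp
    finally show ?thesis .
  qed
  define v where "v = (\<lambda>k. u k - u r * w k)"
  show "\<exists>v\<in>{u \<in> U. u r = 0}. \<forall>k<r. cmod (v k - (x k - x r * w k)) \<le> d"
  proof (rule bexI[of _ v])
    show "v \<in> {u \<in> U. u r = 0}"
      using csubspace_seq_diff[OF U \<open>u \<in> U\<close> \<open>w \<in> U\<close>] \<open>w r = 1\<close> by (simp add: v_def)
    show "\<forall>k<r. cmod (v k - (x k - x r * w k)) \<le> d" using close by (simp add: v_def)
  qed
qed

lemma approx_in_coords_vanishing_coord:
  assumes "approx_in_coords (Suc r) U x" and "\<forall>u\<in>U. u r = 0"
  shows "x r = 0"
proof (rule ccontr)
  assume "x r \<noteq> 0"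
  then have "cmod (x r) / 2 > 0" by simp
  then obtain u where "u \<in> U" and u: "\<forall>k<Suc r. cmod (u k - x k) \<le> cmod (x r) / 2"
    using assms(1) unfolding approx_in_coords_def by blast
  then have "cmod (0 - x r) \<le> cmod (x r) / 2" using assms(2) by fastforce
  then show False using \<open>cmod (x r) / 2 > 0\<close> by simp
qed

lemma csubspace_seq_exact_in_coords:
  assumes "csubspace_seq U" "approx_in_coords r U x"
  shows "\<exists>u\<in>U. \<forall>k<r. u k = x k"
  using assms
proof (induction r arbitrary: U x)
  case 0
  then have "(\<lambda>k. 0) \<in> U" by (simp add: csubspace_seq_def)
  then show ?case by blast
next
  case (Suc r)
  have approx_r: "approx_in_coords r U x"
    using Suc.prems(2) unfolding approx_in_coords_def by (metis less_SucI)
  show ?case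
  proof (cases "\<exists>w\<in>U. w r \<noteq> 0")
    case True
    then obtain w0 where "w0 \<in> U" "w0 r \<noteq> 0" by blast
    define w where "w = (\<lambda>k. (1 / w0 r) * w0 k)"
    have "w \<in> U" unfolding w_def by (rule csubspace_seq_scale[OF Suc.prems(1) \<open>w0 \<in> U\<close>])
    have "w r = 1" using \<open>w0 r \<noteq> 0\<close> by (simp add: w_def)
    obtain v where "v \<in> U" "v r = 0" and v: "\<forall>k<r. v k = x k - x r * w k"
      using Suc.IH[OF csubspace_seq_kernel[OF Suc.prems(1)]
          approx_in_coords_eliminate[OF Suc.prems(1) \<open>w \<in> U\<close> \<open>w r = 1\<close> Suc.prems(2)]]
      by blast
    define u where "u = (\<lambda>k. v k - (- x r) * w k)"
    show ?thesis
    proof (rule bexI[of _ u])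
      show "u \<in> U" unfolding u_def by (rule csubspace_seq_diff[OF Suc.prems(1) \<open>v \<in> U\<close> \<open>w \<in> U\<close>])
      show "\<forall>k<Suc r. u k = x k"
        using v \<open>v r = 0\<close> \<open>w r = 1\<close> by (auto simp: u_def less_Suc_eq)
    qed
  next
    case False
    then have vanish: "u r = 0" if "u \<in> U" for u using that by blast
    have "x r = 0" using approx_in_coords_vanishing_coord[OF Suc.prems(2)] vanish by blast
    obtain u where "u \<in> U" and u: "\<forall>k<r. u k = x k"
      using Suc.IH[OF Suc.prems(1) approx_r] by blast
    have "\<forall>k<Suc r. u k = x k"
      using u vanish[OF \<open>u \<in> U\<close>] \<open>x r = 0\<close> by (simp add: less_Suc_eq)
    then show ?thesis using \<open>u \<in> U\<close> by blast
  qed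
qed

lemma ent_closureD:
  "h \<in> ent_closure V \<Longrightarrow> compact K \<Longrightarrow> e > 0 \<Longrightarrow> \<exists>v\<in>V. \<forall>z\<in>K. cmod (poly v z - h z) < e"
  by (simp add: ent_closure_def)

lemma poly_mem_ent_closure:
  assumes "v \<in> V"
  shows "poly v \<in> ent_closure V"
proof -
  have "poly v holomorphic_on UNIV" by (intro holomorphic_intros)
  moreover have "\<exists>w\<in>V. \<forall>z\<in>K. cmod (poly w z - poly v z) < e" if "e > 0" for K e
    using assms that by (intro bexI[of _ v]) simp_all
  ultimately show ?thesis by (simp add: ent_closure_def)
qed

lemma ent_closure_closed:
  assumes "h holomorphic_on UNIV" and approx: "approx_on_compacts (ent_closure V) h"
  shows "h \<in> ent_closure V"
  unfolding ent_closure_def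
proof (intro CollectI conjI allI impI assms(1), elim conjE)
  fix K :: "complex set" and e :: real assume "compact K" "e > 0"
  then obtain f where "f \<in> ent_closure V" and f: "\<forall>z\<in>K. cmod (f z - h z) < e / 2"
    using approx unfolding approx_on_compacts_def by (meson half_gt_zero)
  then obtain v where "v \<in> V" and v: "\<forall>z\<in>K. cmod (poly v z - f z) < e / 2"
    using ent_closureD \<open>compact K\<close> \<open>e > 0\<close> half_gt_zero by blast
  have "cmod (poly v z - h z) < e" if "z \<in> K" for z
    using f v that norm_triangle_ineq[of "poly v z - f z" "f z - h z"] by fastforce
  then show "\<exists>v\<in>V. \<forall>z\<in>K. cmod (poly v z - h z) < e" using \<open>v \<in> V\<close> by blast
qed

lemma ent_closure_mono: "V \<subseteq> V' \<Longrightarrow> ent_closure V \<subseteq> ent_closure V'"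
  unfolding ent_closure_def by blast

lemma norm_coeff_le_if_norm_poly_less:
  fixes P :: "complex poly"
  assumes "\<forall>z\<in>cball 0 1. cmod (poly P z) < d"
  shows "cmod (coeff P k) \<le> d"
proof -
  have "(deriv ^^ k) (poly P) 0 = fact k * coeff P k"
    by (simp add: higher_deriv_poly poly_0_coeff_0 coeff_higher_pderiv pochhammer_fact)
  moreover have "cmod ((deriv ^^ k) (poly P) 0) \<le> fact k * d"
    using assms by (intro norm_higher_deriv_le[where c = 0 and R = 0]) (auto intro: holomorphic_intros)
  ultimately show ?thesis by (simp add: norm_mult)
qed

lemma power_linear_dvd_if_shifted_coeffs_vanish:
  fixes p :: "complex poly"
  assumes "\<forall>k<r. coeff (p \<circ>\<^sub>p [:a, 1:]) k = 0"
  shows "[:-a, 1:] ^ r dvd p"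
proof -
  obtain Q where Q: "p \<circ>\<^sub>p [:a, 1:] = monom 1 r * Q"
    using assms monom_1_dvd_iff' by blast
  have "poly p z = poly ([:-a, 1:] ^ r * (Q \<circ>\<^sub>p [:-a, 1:])) z" for z
    using arg_cong[OF Q, of "\<lambda>q. poly q (z - a)"] by (simp add: poly_pcompose poly_monom)
  then have "p = [:-a, 1:] ^ r * (Q \<circ>\<^sub>p [:-a, 1:])" by (intro poly_ext)
  then show ?thesis by (rule dvdI)
qed

lemma csubspace_seq_shifted_coeffs:
  assumes V: "csubspace_poly V"
  shows "csubspace_seq ((\<lambda>w k. coeff (w \<circ>\<^sub>p [:lam, 1:]) k) ` V)" (is "csubspace_seq (?J ` V)")
  unfolding csubspace_seq_def
proof (intro conjI ballI allI)
  show "(\<lambda>k. 0) \<in> ?J ` V" using V by (intro image_eqI[of _ _ 0]) (auto simp: csubspace_poly_def)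
  show "(\<lambda>k. x k + y k) \<in> ?J ` V" if xy: "x \<in> ?J ` V" "y \<in> ?J ` V" for x y
  proof -
    obtain a b where "a \<in> V" "b \<in> V" "x = ?J a" "y = ?J b" using xy by blast
    moreover have "(\<lambda>k. ?J a k + ?J b k) = ?J (a + b)" by (simp add: pcompose_add fun_eq_iff)
    ultimately show ?thesis using V unfolding csubspace_poly_def by auto
  qed
  show "(\<lambda>k. c * x k) \<in> ?J ` V" if x: "x \<in> ?J ` V" for c x
  proof -
    obtain a where "a \<in> V" "x = ?J a" using x by blast
    moreover have "(\<lambda>k. c * ?J a k) = ?J (smult c a)" by (simp add: pcompose_smult fun_eq_iff)
    ultimately show ?thesis using V unfolding csubspace_poly_def by auto
  qed
qed

text \<open>The r lowest Taylor coefficients at lam determine a polynomial modulo (z - lam)^r, and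
  they depend continuously on the polynomial.\<close>

lemma mem_subspace_if_poly_mem_ent_closure:
  fixes V :: "complex poly set"
  assumes V: "csubspace_poly V" and ideal: "\<forall>q. [:-lam, 1:] ^ r * q \<in> V"
    and v: "poly v \<in> ent_closure V"
  shows "v \<in> V"
proof -
  define J where "J w = (\<lambda>k. coeff (w \<circ>\<^sub>p [:lam, 1:]) k)" for w :: "complex poly"
  have J_diff: "J w k - J w' k = coeff ((w - w') \<circ>\<^sub>p [:lam, 1:]) k" for w w' k
    by (simp add: J_def pcompose_diff)
  have "csubspace_seq (J ` V)" unfolding J_def by (rule csubspace_seq_shifted_coeffs[OF V])
  moreover have "approx_in_coords r (J ` V) (J v)"
    unfolding approx_in_coords_def
  proof (intro allI impI)
    fix d :: real assume "d > 0"
    then obtain w where "w \<in> V" and w: "\<forall>z\<in>cball lam 1. cmod (poly w z - poly v z) < d"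
      using ent_closureD[OF v compact_cball] by blast
    have "\<forall>z\<in>cball 0 1. cmod (poly ((w - v) \<circ>\<^sub>p [:lam, 1:]) z) < d"
      using w by (auto simp: poly_pcompose dist_norm algebra_simps)
    then have "cmod (J w k - J v k) \<le> d" for k
      unfolding J_diff by (rule norm_coeff_le_if_norm_poly_less)
    then show "\<exists>u\<in>J ` V. \<forall>k<r. cmod (u k - J v k) \<le> d" using \<open>w \<in> V\<close> by blast
  qed
  ultimately have "\<exists>u\<in>J ` V. \<forall>k<r. u k = J v k" by (rule csubspace_seq_exact_in_coords)
  then obtain w where "w \<in> V" and "\<forall>k<r. J w k = J v k" by blast
  then have "\<forall>k<r. coeff ((v - w) \<circ>\<^sub>p [:lam, 1:]) k = 0" by (simp flip: J_diff)
  then obtain q where "v - w = [:-lam, 1:] ^ r * q"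
    using power_linear_dvd_if_shifted_coeffs_vanish by blast
  then have "v - w \<in> V" using ideal by simp
  then have "w + (v - w) \<in> V" using V \<open>w \<in> V\<close> unfolding csubspace_poly_def by blast
  then show ?thesis by simp
qed

lemma V_of_closed:
  assumes "adelic_data Lam Vs" and "poly v \<in> ent_closure (V_of Lam Vs)"
  shows "v \<in> V_of Lam Vs"
  unfolding V_of_def
proof
  fix lam assume "lam \<in> Lam"
  then obtain r where "csubspace_poly (Vs lam)" "\<forall>q. [:-lam, 1:] ^ r * q \<in> Vs lam"
    using assms(1) unfolding adelic_data_def by blast
  moreover have "poly v \<in> ent_closure (Vs lam)"
    using assms(2) ent_closure_mono[of "V_of Lam Vs" "Vs lam"] \<open>lam \<in> Lam\<close> by (auto simp: V_of_def)
  ultimately show "v \<in> Vs lam" by (rule mem_subspace_if_poly_mem_ent_closure)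
qed

lemma m_of_nonzero: "m_of Lam Vs \<noteq> 0"
  unfolding m_of_def by (induction Lam rule: infinite_finite_induct) auto

lemma gamma_polys_iff:
  "q \<in> gamma_polys p V \<longleftrightarrow> (\<lambda>z. exp (- poly p z) * poly q z) \<in> ent_closure V"
proof -
  have "poly q z = exp (poly p z) * f z \<longleftrightarrow> f z = exp (- poly p z) * poly q z" for f z
    by (auto simp: exp_minus_inverse mult.assoc[symmetric] mult.commute[of "exp (- poly p z)"])
  then have "(\<forall>z. poly q z = exp (poly p z) * f z) \<longleftrightarrow> f = (\<lambda>z. exp (- poly p z) * poly q z)" for f
    by (auto simp: fun_eq_iff)
  then show ?thesis by (simp add: gamma_polys_def)
qed

lemma W_of_eq_gamma_act_0:
  assumes "adelic_data Lam Vs"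
  shows "W_of Lam Vs = gamma_act 0 Lam Vs"
proof -
  have "gamma_polys 0 (V_of Lam Vs) = V_of Lam Vs"
    using V_of_closed[OF assms] poly_mem_ent_closure by (auto simp: gamma_polys_iff)
  then show ?thesis by (simp add: W_of_def gamma_act_def)
qed

lemma gamma_act_numerators:
  assumes D: "D \<in> R_of (gamma_act p0 Lam Vs)"
    and "\<beta> \<noteq> 0" and coeffs: "\<forall>i\<le>degree D. coeff D i = Fract (\<alpha> i) \<beta>"
  shows "\<exists>f\<in>ent_closure (V_of Lam Vs). \<forall>z. f z * poly \<beta> z =
    exp (- poly p0 z) * poly (m_of Lam Vs) z * (\<Sum>i\<le>degree D. poly (\<alpha> i) z * poly ((pderiv ^^ i) T) z)"
proof -
  obtain s where s: "s \<in> gamma_polys p0 (V_of Lam Vs)" and "dapply D (to_fract T) = Fract s (m_of Lam Vs)"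
    using D unfolding R_of_def gamma_act_def by blast
  then have "Fract (\<Sum>i\<le>degree D. \<alpha> i * (pderiv ^^ i) T) \<beta> = Fract s (m_of Lam Vs)"
    by (simp add: dapply_Fract_coeffs[OF \<open>\<beta> \<noteq> 0\<close> coeffs])
  then have "s * \<beta> = (\<Sum>i\<le>degree D. \<alpha> i * (pderiv ^^ i) T) * m_of Lam Vs"
    using \<open>\<beta> \<noteq> 0\<close> m_of_nonzero by (simp add: eq_fract)
  then have "poly (s * \<beta>) z = poly ((\<Sum>i\<le>degree D. \<alpha> i * (pderiv ^^ i) T) * m_of Lam Vs) z" for z
    by simp
  then have numerators: "poly s z * poly \<beta> z =
      poly (m_of Lam Vs) z * (\<Sum>i\<le>degree D. poly (\<alpha> i) z * poly ((pderiv ^^ i) T) z)" for z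
    by (simp add: poly_sum mult.commute)
  show ?thesis
  proof (rule bexI[of _ "\<lambda>z. exp (- poly p0 z) * poly s z"])
    show "(\<lambda>z. exp (- poly p0 z) * poly s z) \<in> ent_closure (V_of Lam Vs)"
      using s by (simp add: gamma_polys_iff)
    show "\<forall>z. exp (- poly p0 z) * poly s z * poly \<beta> z = exp (- poly p0 z) * poly (m_of Lam Vs) z *
        (\<Sum>i\<le>degree D. poly (\<alpha> i) z * poly ((pderiv ^^ i) T) z)"
      using numerators by (simp add: mult.assoc)
  qed
qed

lemma Phi_mem_R_of_gamma_act:
  assumes D: "D \<in> R_of (gamma_act p0 Lam Vs)"
  shows "Phi p D \<in> R_of (gamma_act (p0 + p) Lam Vs)"
  unfolding R_of_def
proof (intro CollectI allI)
  fix q :: "complex poly"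
  define m where "m = m_of Lam Vs"
  obtain \<alpha> \<beta> where "\<beta> \<noteq> 0" and coeffs: "\<forall>i\<le>degree D. coeff D i = Fract (\<alpha> i) \<beta>"
    using common_denominator by blast
  define \<rho> where "\<rho> = (\<Sum>i\<le>degree D. \<alpha> i * (twisted_pderiv p ^^ i) q)"
  define H where "H z = exp (- poly p0 z) * poly m z" for z
  define g where "g = (\<lambda>z. exp (- poly p z) * poly q z)"
  have "exp (poly (- (p0 + p)) z) = exp (- poly p0 z) * exp (- poly p z)" for z
    by (simp add: exp_add[symmetric])
  then have identity: "\<forall>z. H z * (\<Sum>i\<le>degree D. poly (\<alpha> i) z * (deriv ^^ i) g z) =
      exp (poly (- (p0 + p)) z) * poly (m * \<rho>) z"
    unfolding g_def higher_deriv_exp_poly_mult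
    by (simp add: H_def \<rho>_def poly_sum sum_distrib_left mult_ac)
  have "H holomorphic_on UNIV" "g holomorphic_on UNIV"
    unfolding H_def g_def by (intro holomorphic_intros)+
  moreover have "\<forall>f\<in>ent_closure (V_of Lam Vs). f holomorphic_on UNIV" by (simp add: ent_closure_def)
  moreover have "\<forall>T. \<exists>f\<in>ent_closure (V_of Lam Vs). \<forall>z.
      f z * poly \<beta> z = H z * (\<Sum>i\<le>degree D. poly (\<alpha> i) z * poly ((pderiv ^^ i) T) z)"
    using gamma_act_numerators[OF D \<open>\<beta> \<noteq> 0\<close> coeffs] by (simp add: H_def m_def)
  ultimately obtain s where s: "m * \<rho> = \<beta> * s"
    and approx: "approx_on_compacts (ent_closure (V_of Lam Vs)) (\<lambda>z. exp (poly (- (p0 + p)) z) * poly s z)"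
    using exists_quotient_approx_on_compacts[OF _ _ _ \<open>\<beta> \<noteq> 0\<close> _ identity] by blast
  have "(\<lambda>z. exp (poly (- (p0 + p)) z) * poly s z) \<in> ent_closure (V_of Lam Vs)"
    by (rule ent_closure_closed[OF _ approx]) (intro holomorphic_intros)
  then have "s \<in> gamma_polys (p0 + p) (V_of Lam Vs)" by (simp add: gamma_polys_iff)
  moreover have "dapply (Phi p D) (to_fract q) = Fract s m"
    using s \<open>\<beta> \<noteq> 0\<close> m_of_nonzero
    by (simp add: dapply_Phi_Fract_coeffs[OF \<open>\<beta> \<noteq> 0\<close> coeffs] \<rho>_def m_def eq_fract mult.commute)
  ultimately show "dapply (Phi p D) (to_fract q) \<in> gamma_act (p0 + p) Lam Vs"
    unfolding gamma_act_def m_def by blast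
qed

theorem proposition5p2:
  fixes Lam :: "complex set" and Vs :: "complex \<Rightarrow> complex poly set" and p :: "complex poly"
  assumes "adelic_data Lam Vs"
  shows "R_of (gamma_act p Lam Vs) = Phi p ` R_of (W_of Lam Vs)"
proof
  show "R_of (gamma_act p Lam Vs) \<subseteq> Phi p ` R_of (W_of Lam Vs)"
  proof
    fix D assume "D \<in> R_of (gamma_act p Lam Vs)"
    then have "Phi (- p) D \<in> R_of (W_of Lam Vs)"
      using Phi_mem_R_of_gamma_act[of D p Lam Vs "- p"] W_of_eq_gamma_act_0[OF assms] by simp
    then show "D \<in> Phi p ` R_of (W_of Lam Vs)" by (rule rev_image_eqI) (simp add: Phi_Phi_uminus)
  qed
  show "Phi p ` R_of (W_of Lam Vs) \<subseteq> R_of (gamma_act p Lam Vs)"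
    using Phi_mem_R_of_gamma_act[of _ 0 Lam Vs p] W_of_eq_gamma_act_0[OF assms] by auto
qed

end
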